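(* Let $p$ be an odd prime and let $(P_n)_{n\ge0}$ be the Catalan-Larcombe-French numbers. Then for all integers $n$ with $0\le n\le p-1$, $$128^nP_{p-1-n}\equiv(-1)^{\frac{p-1}{2}}P_n\pmod{p}.$$ In particular, for $0\le n\le p-1$, $p\mid P_n$ if and only if $p\mid P_{p-1-n}$.
   Context: The Catalan-Larcombe-French numbers are defined by $P_0=1$, $P_1=8$ and, for $n\ge 2$, $n^2P_n-8(3n^2-3n+1)P_{n-1}+128(n-1)^2P_{n-2}=0$. *)

theory Defs
  imports "HOL-Number_Theory.Number_Theory"
begin

text \<open>Catalan-Larcombe-French numbers: P 0 = 1, P 1 = 8 and for n \<ge> 2,
  n^2 P n = 8(3n^2-3n+1) P (n-1) - 128 (n-1)^2 P (n-2).
  The numbers are integers (the division below is exact).\<close>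
fun CLF :: "nat \<Rightarrow> int" where
  "CLF 0 = 1"
| "CLF (Suc 0) = 8"
| "CLF (Suc (Suc m)) =
     (8 * (3 * int (m+2)^2 - 3 * int (m+2) + 1) * CLF (Suc m)
      - 128 * int (m+1)^2 * CLF m) div (int (m+2))^2"

end

theory Submission
  imports Defs
begin

(* With A(n) = sum_j C(n,j) C(2j,j) C(2n-2j,n-j), a creative-telescoping certificate gives
   n^2 A(n) = 4(3n^2-3n+1) A(n-1) - 32(n-1)^2 A(n-2); hence P(n) = 2^n A(n), and the recurrence
   of P holds without the division. Read modulo p, the recurrence at index p+1-j is the recurrence
   at index j, so b(j) = 128^j P(p-1-j) satisfies the recurrence of P for 2 <= j < p, where the
   leading coefficient j^2 is a unit; as b(0) = P(p-1) and b(1) = 128 P(p-2) = 8 P(p-1) mod p,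
   this forces b(j) = P(p-1) P(j) mod p. Finally, modulo p only the central term C(p-1,h)^3,
   h = (p-1)/2, of A(p-1) survives, C(p-1,h) = (-1)^h mod p, and Fermat's theorem removes 2^(p-1). *)

(* C(j+m,j) C(2j,j) C(2m,m), in factorial form so that its shift quotients are rational. *)
definition clf_summand :: "nat \<Rightarrow> nat \<Rightarrow> real" where
  "clf_summand j m = fact (j + m) * fact (2 * j) * fact (2 * m) / (fact j ^ 3 * fact m ^ 3)"

lemma clf_summand_Suc_right:
  "clf_summand j (Suc m) = 2 * (j + m + 1) * (2 * m + 1) / (m + 1)^2 * clf_summand j m"
  unfolding clf_summand_def
  by (simp add: fact_Suc field_simps del: of_nat_Suc) (simp add: algebra_simps power2_eq_square power3_eq_cube)

lemma clf_summand_Suc_left: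
  "clf_summand (Suc j) m = 2 * (j + m + 1) * (2 * j + 1) / (j + 1)^2 * clf_summand j m"
  unfolding clf_summand_def
  by (simp add: fact_Suc field_simps del: of_nat_Suc) (simp add: algebra_simps power2_eq_square power3_eq_cube)

(* Zeilberger's certificate for the recurrence of A, as a function of the summand's indices. *)
definition clf_certificate :: "nat \<Rightarrow> nat \<Rightarrow> real" where
  "clf_certificate j m = real j ^ 2 * (3 * real (j + m) - 2 * real j + 2 * real (j + m) * real j
      - 2 * real (j + m) ^ 2) * clf_summand j m / (real (j + m) * (2 * real m - 1))"

lemma clf_summand_creative_telescoping:
  "clf_certificate (Suc j) (Suc m) - clf_certificate j (m + 2) =
     real (j + m + 2) ^ 2 * clf_summand j (m + 2)
     - 4 * (3 * real (j + m + 2) ^ 2 - 3 * real (j + m + 2) + 1) * clf_summand j (m + 1)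
     + 32 * real (j + m + 1) ^ 2 * clf_summand j m"
proof -
  define x y where "x = real j" and "y = real m"
  define n where "n = x + y + 2"
  define r where "r t = 3 * n - 2 * t + 2 * n * t - 2 * n ^ 2" for t
  define f1 where "f1 = clf_summand j (m + 1)"
  have pos: "x \<ge> 0" "y \<ge> 0" "n > 0" unfolding x_def y_def n_def by auto
  have F: "clf_summand j m = (y + 1)^2 / (2 * (x + y + 1) * (2 * y + 1)) * f1"
  proof -
    have "2 * (x + y + 1) * (2 * y + 1) / (y + 1)^2 \<noteq> 0" using pos by simp
    then show ?thesis
      using clf_summand_Suc_right[of j m] unfolding f1_def x_def y_def by (simp add: field_simps)
  qed
  have f2: "clf_summand j (m + 2) = 2 * n * (2 * y + 3) / (y + 2)^2 * f1"
    using clf_summand_Suc_right[of j "Suc m"]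
    unfolding f1_def n_def x_def y_def by (simp add: algebra_simps)
  have c1: "clf_certificate (Suc j) (Suc m) = 2 * (2 * x + 1) * r (x + 1) / (2 * y + 1) * f1"
  proof -
    have "clf_certificate (Suc j) (Suc m)
        = (x + 1)^2 * r (x + 1) * clf_summand (Suc j) (Suc m) / (n * (2 * y + 1))"
      unfolding clf_certificate_def r_def n_def x_def y_def by (simp add: algebra_simps)
    also have "clf_summand (Suc j) (Suc m) = 2 * n * (2 * x + 1) / (x + 1)^2 * f1"
      unfolding clf_summand_Suc_left f1_def n_def x_def y_def by (simp add: algebra_simps)
    finally show ?thesis using pos by (simp add: divide_simps)
  qed
  have c2: "clf_certificate j (m + 2) = 2 * x^2 * r x / (y + 2)^2 * f1"
  proof -
    have "clf_certificate j (m + 2) = x^2 * r x * clf_summand j (m + 2) / (n * (2 * y + 3))"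
      unfolding clf_certificate_def r_def n_def x_def y_def by (simp add: algebra_simps)
    then show ?thesis using pos unfolding f2 by (simp add: divide_simps)
  qed
  have "real (j + m + 2) = n" "real (j + m + 1) = n - 1" unfolding n_def x_def y_def by simp_all
  then show ?thesis
    unfolding F f2 c1 c2 f1_def[symmetric] using pos
    by (simp add: divide_simps r_def n_def) (simp add: algebra_simps power2_eq_square)
qed

lemma clf_summand_sum_telescope:
  fixes N :: nat
  defines "n \<equiv> real N + 2"
  shows "(\<Sum>j\<le>N. n^2 * clf_summand j (N - j + 2) - 4 * (3 * n^2 - 3 * n + 1) * clf_summand j (N - j + 1)
      + 32 * (n - 1)^2 * clf_summand j (N - j)) = clf_certificate (N + 1) 1"
proof -
  have "(\<Sum>j\<le>N. n^2 * clf_summand j (N - j + 2) - 4 * (3 * n^2 - 3 * n + 1) * clf_summand j (N - j + 1)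
      + 32 * (n - 1)^2 * clf_summand j (N - j))
    = (\<Sum>j=0..N. clf_certificate (Suc j) (N + 2 - Suc j) - clf_certificate j (N + 2 - j))"
    unfolding atLeast0AtMost
  proof (rule sum.cong)
    fix j assume "j \<in> {..N}"
    then have "j + (N - j) = N" "N + 2 - Suc j = Suc (N - j)" "N + 2 - j = N - j + 2" by auto
    then show "n^2 * clf_summand j (N - j + 2) - 4 * (3 * n^2 - 3 * n + 1) * clf_summand j (N - j + 1)
        + 32 * (n - 1)^2 * clf_summand j (N - j)
      = clf_certificate (Suc j) (N + 2 - Suc j) - clf_certificate j (N + 2 - j)"
      using clf_summand_creative_telescoping[of j "N - j"] unfolding n_def by (simp add: algebra_simps)
  qed simp
  also have "\<dots> = clf_certificate (N + 1) 1"
    by (subst sum_Suc_diff) (simp_all add: clf_certificate_def)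
  finally show ?thesis .
qed

lemma clf_summand_sum_recurrence:
  fixes N :: nat
  defines "S \<equiv> \<lambda>n. \<Sum>j\<le>n. clf_summand j (n - j)" and "n \<equiv> real N + 2"
  shows "n^2 * S (N + 2) - 4 * (3 * n^2 - 3 * n + 1) * S (N + 1) + 32 * (n - 1)^2 * S N = 0"
proof -
  define c where "c = 4 * (3 * n^2 - 3 * n + 1)"
  define g where "g = clf_summand (N + 1) 0"
  have "n > 0" unfolding n_def by simp
  have S2: "S (N + 2) = (\<Sum>j\<le>N. clf_summand j (N - j + 2)) + clf_summand (N + 1) 1 + clf_summand (N + 2) 0"
    unfolding S_def by (simp add: numeral_2_eq_2 Suc_diff_le)
  have S1: "S (N + 1) = (\<Sum>j\<le>N. clf_summand j (N - j + 1)) + g"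
    unfolding S_def g_def by (simp add: Suc_diff_le)
  have g1: "clf_summand (N + 1) 1 = 2 * n * g"
    using clf_summand_Suc_right[of "N + 1" 0] unfolding g_def n_def by simp
  have g2: "clf_summand (N + 2) 0 = 2 * n * (2 * n - 1) / n^2 * g"
    using clf_summand_Suc_left[of "N + 1" 0] unfolding g_def n_def by (simp add: algebra_simps)
  have cert: "clf_certificate (N + 1) 1 = 2 * (n - 1)^2 * (2 - n) * g"
    using \<open>n > 0\<close> unfolding clf_certificate_def g1 unfolding n_def
    by (simp add: field_simps power2_eq_square)
  have telescope: "(\<Sum>j\<le>N. n^2 * clf_summand j (N - j + 2) - c * clf_summand j (N - j + 1)
      + 32 * (n - 1)^2 * clf_summand j (N - j)) = clf_certificate (N + 1) 1"
    using clf_summand_sum_telescope[of N] unfolding c_def n_def .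
  have "n^2 * S (N + 2) - c * S (N + 1) + 32 * (n - 1)^2 * S N
      = clf_certificate (N + 1) 1 + n^2 * (clf_summand (N + 1) 1 + clf_summand (N + 2) 0) - c * g"
    unfolding S2 S1 telescope[symmetric]
    by (simp add: S_def sum.distrib sum_subtractf sum_distrib_left algebra_simps)
  also have "\<dots> = 0"
    unfolding cert g1 g2 c_def using \<open>n > 0\<close> by (simp add: field_simps power2_eq_square)
  finally show ?thesis unfolding c_def .
qed

definition clf_binomial_sum :: "nat \<Rightarrow> int" where
  "clf_binomial_sum n = (\<Sum>j\<le>n. int ((n choose j) * (2 * j choose j) * (2 * (n - j) choose (n - j))))"

lemma of_int_clf_binomial_sum: "real_of_int (clf_binomial_sum n) = (\<Sum>j\<le>n. clf_summand j (n - j))"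
  unfolding clf_binomial_sum_def of_int_sum
proof (rule sum.cong)
  fix j assume "j \<in> {..n}"
  then have "j \<le> n" by simp
  have central: "real (2 * k choose k) = fact (2 * k) / (fact k * fact k)" for k
    using binomial_fact[of k "2 * k"] by (simp add: mult_2)
  have "j + (n - j) = n" using \<open>j \<le> n\<close> by simp
  then show "real_of_int (int ((n choose j) * (2 * j choose j) * (2 * (n - j) choose (n - j))))
      = clf_summand j (n - j)"
    unfolding clf_summand_def using binomial_fact[OF \<open>j \<le> n\<close>, where 'a = real]
    by (simp add: central power3_eq_cube)
qed simp

lemma clf_binomial_sum_recurrence:
  "int (N + 2)^2 * clf_binomial_sum (N + 2) = 4 * (3 * int (N + 2)^2 - 3 * int (N + 2) + 1)
     * clf_binomial_sum (N + 1) - 32 * int (N + 1)^2 * clf_binomial_sum N"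
proof -
  have "real_of_int (int (N + 2)^2 * clf_binomial_sum (N + 2)) = real_of_int (4 * (3 * int (N + 2)^2
     - 3 * int (N + 2) + 1) * clf_binomial_sum (N + 1) - 32 * int (N + 1)^2 * clf_binomial_sum N)"
    using clf_summand_sum_recurrence[of N] unfolding of_int_clf_binomial_sum[symmetric]
    by (simp add: algebra_simps)
  then show ?thesis by (simp only: of_int_eq_iff)
qed

lemma scaled_clf_binomial_sum_recurrence:
  "8 * (3 * int (m + 2)^2 - 3 * int (m + 2) + 1) * (2 ^ (m + 1) * clf_binomial_sum (m + 1))
     - 128 * int (m + 1)^2 * (2 ^ m * clf_binomial_sum m)
   = int (m + 2)^2 * (2 ^ (m + 2) * clf_binomial_sum (m + 2))"
proof -
  have "int (m + 2)^2 * (2 ^ (m + 2) * clf_binomial_sum (m + 2))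
      = 2 ^ (m + 2) * (int (m + 2)^2 * clf_binomial_sum (m + 2))"
    by (simp add: ac_simps)
  then show ?thesis
    unfolding clf_binomial_sum_recurrence by (simp add: power_add algebra_simps)
qed

lemma CLF_eq_binomial_sum: "CLF n = 2 ^ n * clf_binomial_sum n"
proof (induction n rule: CLF.induct)
  case (3 m)
  then show ?case
    using scaled_clf_binomial_sum_recurrence[of m] by (simp add: numeral_2_eq_2)
qed (simp_all add: clf_binomial_sum_def)

lemma CLF_recurrence:
  "int (m + 2)^2 * CLF (m + 2)
     = 8 * (3 * int (m + 2)^2 - 3 * int (m + 2) + 1) * CLF (m + 1) - 128 * int (m + 1)^2 * CLF m"
  unfolding CLF_eq_binomial_sum scaled_clf_binomial_sum_recurrence ..

lemma binomial_pred_prime_cong: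
  assumes "prime p" and "j < p"
  shows "[int ((p - 1) choose j) = (-1) ^ j] (mod int p)"
  using assms(2)
proof (induction j)
  case (Suc j)
  have "p dvd (p choose Suc j)"
    using Suc.prems assms(1) by (intro dvd_choose_prime) auto
  moreover have "p choose Suc j = ((p - 1) choose j) + ((p - 1) choose Suc j)"
    using prime_gt_0_nat[OF assms(1)] binomial_Suc_Suc[of "p - 1" j] by simp
  ultimately have "int p dvd int ((p - 1) choose j) + int ((p - 1) choose Suc j)"
    by (metis of_nat_add of_nat_dvd_iff)
  moreover have "int p dvd int ((p - 1) choose j) - (-1) ^ j"
    using Suc by (simp add: cong_iff_dvd_diff)
  ultimately have "int p dvd (int ((p - 1) choose j) + int ((p - 1) choose Suc j))
      - (int ((p - 1) choose j) - (-1) ^ j)"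
    by (rule dvd_diff)
  then show ?case by (simp add: cong_iff_dvd_diff)
qed simp

lemma prime_dvd_central_binomial:
  assumes "prime p" and "p \<le> 2 * j" and "j < p"
  shows "p dvd (2 * j choose j)"
proof -
  have "fact (2 * j) = fact j * fact j * (2 * j choose j)"
    using binomial_fact_lemma[of j "2 * j"] by (simp add: mult_2)
  moreover have "p dvd fact (2 * j)" and "\<not> p dvd fact j"
    using assms by (simp_all add: prime_dvd_fact_iff)
  ultimately show ?thesis
    using assms(1) by (simp add: prime_dvd_mult_iff)
qed

lemma clf_binomial_sum_pred_prime_cong:
  assumes "prime p" and "odd p"
  shows "[clf_binomial_sum (p - 1) = (-1) ^ ((p - 1) div 2)] (mod int p)"
proof -
  define h where "h = (p - 1) div 2"
  define t where "t j = int (((p - 1) choose j) * (2 * j choose j) * (2 * (p - 1 - j) choose (p - 1 - j)))"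
    for j
  have p: "p = 2 * h + 1" unfolding h_def using assms(2) by simp
  have split: "clf_binomial_sum (p - 1) = t h + (\<Sum>j\<in>{..p - 1} - {h}. t j)"
    unfolding clf_binomial_sum_def t_def[symmetric] by (rule sum.remove) (simp_all add: p)
  have off_centre: "int p dvd t j" if "j \<le> p - 1" "j \<noteq> h" for j
  proof (cases "j < h")
    case True
    then have "p dvd (2 * (p - 1 - j) choose (p - 1 - j))"
      using that p by (intro prime_dvd_central_binomial assms(1)) auto
    then show ?thesis unfolding t_def by (simp flip: of_nat_dvd_iff)
  next
    case False
    then have "p dvd (2 * j choose j)"
      using that p by (intro prime_dvd_central_binomial assms(1)) auto
    then show ?thesis unfolding t_def by (simp flip: of_nat_dvd_iff)
  qed
  have centre: "[t h = ((-1) ^ h) ^ 3] (mod int p)"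
  proof -
    have "t h = int ((p - 1) choose h) ^ 3"
      unfolding t_def by (simp add: p power3_eq_cube)
    then show ?thesis
      using binomial_pred_prime_cong[OF assms(1), of h] p by (simp add: cong_pow)
  qed
  have "[(\<Sum>j\<in>{..p - 1} - {h}. t j) = 0] (mod int p)"
    using off_centre by (auto simp: cong_0_iff intro!: dvd_sum)
  with centre have "[clf_binomial_sum (p - 1) = ((-1) ^ h) ^ 3 + 0] (mod int p)"
    unfolding split by (rule cong_add)
  moreover have "((-1 :: int) ^ h) ^ 3 = (-1) ^ h"
    by (simp add: minus_one_power_iff flip: power_mult)
  ultimately show ?thesis unfolding h_def by simp
qed

lemma odd_prime_not_dvd_power_two:
  assumes "prime p" and "odd p"
  shows "\<not> int p dvd 2 ^ k"
proof
  assume dvd: "int p dvd 2 ^ k"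
  have "prime (int p)" using assms(1) by simp
  then have "int p dvd 2" using dvd by (rule prime_dvd_power)
  then have "p dvd 2" using of_nat_dvd_iff[of p 2, where 'a = int] by simp
  then have "p = 2" using primes_dvd_imp_eq[OF assms(1) two_is_prime_nat] by simp
  with assms(2) show False by simp
qed

lemma CLF_pred_prime_cong:
  assumes "prime p" and "odd p"
  shows "[CLF (p - 1) = (-1) ^ ((p - 1) div 2)] (mod int p)"
proof -
  have "\<not> p dvd 2"
    using primes_dvd_imp_eq[OF assms(1) two_is_prime_nat] assms(2) by auto
  then have "[2 ^ (p - 1) = 1] (mod p)"
    by (rule fermat_theorem[OF assms(1)])
  then have "[2 ^ (p - 1) = 1] (mod int p)"
    by (metis cong_int_iff of_nat_1 of_nat_numeral of_nat_power)
  then have "[2 ^ (p - 1) * clf_binomial_sum (p - 1) = 1 * (-1) ^ ((p - 1) div 2)] (mod int p)"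
    using clf_binomial_sum_pred_prime_cong[OF assms] by (rule cong_mult)
  then show ?thesis by (simp add: CLF_eq_binomial_sum)
qed

lemma cong_linear_recurrence_unique:
  fixes x y a b c :: "nat \<Rightarrow> int" and q :: int
  assumes rec_x: "\<And>j. 2 \<le> j \<Longrightarrow> j \<le> N \<Longrightarrow> [a j * x j = b j * x (j - 1) + c j * x (j - 2)] (mod q)"
    and rec_y: "\<And>j. 2 \<le> j \<Longrightarrow> j \<le> N \<Longrightarrow> [a j * y j = b j * y (j - 1) + c j * y (j - 2)] (mod q)"
    and coprime: "\<And>j. 2 \<le> j \<Longrightarrow> j \<le> N \<Longrightarrow> coprime (a j) q"
    and "[x 0 = y 0] (mod q)" and "[x 1 = y 1] (mod q)"
  shows "n \<le> N \<Longrightarrow> [x n = y n] (mod q)"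
proof (induction n rule: less_induct)
  case (less n)
  show ?case
  proof (cases "n < 2")
    case True
    then show ?thesis using assms(4,5) by (cases n) (auto simp: numeral_2_eq_2 less_Suc_eq)
  next
    case False
    then have "2 \<le> n" by simp
    have "[b n * x (n - 1) + c n * x (n - 2) = b n * y (n - 1) + c n * y (n - 2)] (mod q)"
      using \<open>2 \<le> n\<close> less by (intro cong_add cong_mult cong_refl less.IH) auto
    then have "[a n * x n = a n * y n] (mod q)"
      using rec_x[OF \<open>2 \<le> n\<close> less.prems] rec_y[OF \<open>2 \<le> n\<close> less.prems]
      by (meson cong_sym cong_trans)
    then show ?thesis
      using coprime[OF \<open>2 \<le> n\<close> less.prems] by (simp add: cong_mult_lcancel)
  qed
qed

lemma CLF_reflected_recurrence:
  fixes p j :: nat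
  assumes "2 \<le> j" and "j < p"
  defines "x \<equiv> \<lambda>i. 128 ^ i * CLF (p - 1 - i)"
  shows "[int j^2 * x j = 8 * (3 * int j^2 - 3 * int j + 1) * x (j - 1)
            + (- 128 * int (j - 1)^2) * x (j - 2)] (mod int p)"
proof -
  define m where "m = p - 1 - j"
  define Q J where "Q = int p" and "J = int j"
  have idx: "p - 1 - (j - 1) = m + 1" "p - 1 - (j - 2) = m + 2" "int (m + 1) = Q - J"
    "int (m + 2) = Q - J + 1" "int (j - 1) = J - 1"
    using assms(1,2) unfolding m_def Q_def J_def by auto
  have pow: "(128::int) ^ j = 128 * 128 ^ (j - 1)" "(128::int) ^ (j - 1) = 128 * 128 ^ (j - 2)"
    using assms(1) by (simp_all flip: power_Suc add: Suc_diff_le numeral_2_eq_2)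
  have exact: "(Q - J)^2 * x j = 8 * (3 * (Q - J + 1)^2 - 3 * (Q - J + 1) + 1) * x (j - 1)
      - 128 * (Q - J + 1)^2 * x (j - 2)"
    using arg_cong[OF CLF_recurrence[of m], of "\<lambda>t. 128 ^ (j - 1) * t"]
    unfolding x_def idx pow m_def[symmetric] by (simp add: algebra_simps)
  have Q0: "[Q = 0] (mod Q)" by (simp add: cong_0_iff)
  then have "[(Q - J)^2 * x j = (0 - J)^2 * x j] (mod Q)"
    and "[8 * (3 * (Q - J + 1)^2 - 3 * (Q - J + 1) + 1) * x (j - 1) - 128 * (Q - J + 1)^2 * x (j - 2)
      = 8 * (3 * (0 - J + 1)^2 - 3 * (0 - J + 1) + 1) * x (j - 1) - 128 * (0 - J + 1)^2 * x (j - 2)] (mod Q)"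
    by (intro cong_add cong_diff cong_mult cong_pow cong_refl Q0)+
  with exact have "[(0 - J)^2 * x j
      = 8 * (3 * (0 - J + 1)^2 - 3 * (0 - J + 1) + 1) * x (j - 1) - 128 * (0 - J + 1)^2 * x (j - 2)] (mod Q)"
    by (metis cong_sym cong_trans)
  then show ?thesis
    unfolding Q_def[symmetric] J_def[symmetric] idx by (simp add: algebra_simps power2_eq_square)
qed

lemma CLF_pred_pred_prime_cong:
  assumes "2 \<le> p"
  shows "[128 * CLF (p - 2) = 8 * CLF (p - 1)] (mod int p)"
proof -
  define Q where "Q = int p"
  have idx: "p - 2 + 2 = p" "p - 2 + 1 = p - 1" "int (p - 1) = Q - 1"
    using assms unfolding Q_def by auto
  have exact: "Q^2 * CLF p = 8 * (3 * Q^2 - 3 * Q + 1) * CLF (p - 1) - 128 * (Q - 1)^2 * CLF (p - 2)"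
    using CLF_recurrence[of "p - 2"] unfolding idx Q_def by simp
  have Q0: "[Q = 0] (mod Q)" by (simp add: cong_0_iff)
  then have "[Q^2 * CLF p = 0^2 * CLF p] (mod Q)"
    and "[8 * (3 * Q^2 - 3 * Q + 1) * CLF (p - 1) - 128 * (Q - 1)^2 * CLF (p - 2)
      = 8 * (3 * 0^2 - 3 * 0 + 1) * CLF (p - 1) - 128 * (0 - 1)^2 * CLF (p - 2)] (mod Q)"
    by (intro cong_add cong_diff cong_mult cong_pow cong_refl Q0)+
  with exact have "[0 = 8 * CLF (p - 1) - 128 * CLF (p - 2)] (mod Q)"
    by (simp add: cong_sym_eq) (metis cong_sym cong_trans)
  then show ?thesis
    unfolding Q_def by (simp add: cong_iff_dvd_diff dvd_diff_commute)
qed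

lemma CLF_reflection_cong:
  assumes "prime p" and "n < p"
  shows "[128 ^ n * CLF (p - 1 - n) = CLF (p - 1) * CLF n] (mod int p)"
proof (rule cong_linear_recurrence_unique[where N = "p - 1"])
  show "[int j^2 * (128 ^ j * CLF (p - 1 - j)) = 8 * (3 * int j^2 - 3 * int j + 1)
      * (128 ^ (j - 1) * CLF (p - 1 - (j - 1))) + (- 128 * int (j - 1)^2) * (128 ^ (j - 2) * CLF (p - 1 - (j - 2)))]
      (mod int p)" if "2 \<le> j" "j \<le> p - 1" for j
    using CLF_reflected_recurrence[of j p] that by simp
  show "[int j^2 * (CLF (p - 1) * CLF j) = 8 * (3 * int j^2 - 3 * int j + 1) * (CLF (p - 1) * CLF (j - 1))
      + (- 128 * int (j - 1)^2) * (CLF (p - 1) * CLF (j - 2))] (mod int p)" if "2 \<le> j" for j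
  proof -
    have "j - 2 + 2 = j" "j - 2 + 1 = j - 1" "int (j - 2 + 1) = int (j - 1)" using that by auto
    then have "int j^2 * (CLF (p - 1) * CLF j) = 8 * (3 * int j^2 - 3 * int j + 1) * (CLF (p - 1) * CLF (j - 1))
      + (- 128 * int (j - 1)^2) * (CLF (p - 1) * CLF (j - 2))"
      using arg_cong[OF CLF_recurrence[of "j - 2"], of "\<lambda>t. CLF (p - 1) * t"]
      by (simp add: algebra_simps)
    then show ?thesis by simp
  qed
  show "coprime (int j ^ 2) (int p)" if "2 \<le> j" "j \<le> p - 1" for j
  proof -
    have "\<not> p dvd j" using that by (auto dest: dvd_imp_le)
    then show ?thesis using prime_imp_coprime[OF assms(1)] by (simp add: coprime_commute)
  qed
  show "[128 ^ 1 * CLF (p - 1 - 1) = CLF (p - 1) * CLF 1] (mod int p)"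
    using CLF_pred_pred_prime_cong[of p] prime_ge_2_nat[OF assms(1)] by (simp add: mult.commute numeral_2_eq_2)
qed (use assms in auto)

theorem corollary5:
  fixes p :: nat
  assumes "prime p" and "odd p"
  shows "\<forall>n. n \<le> p - 1 \<longrightarrow>
           [128 ^ n * CLF (p - 1 - n) = (-1) ^ ((p - 1) div 2) * CLF n] (mod int p)
           \<and> (int p dvd CLF n \<longleftrightarrow> int p dvd CLF (p - 1 - n))"
proof (intro allI impI)
  fix n assume "n \<le> p - 1"
  then have "n < p" using prime_gt_0_nat[OF assms(1)] by linarith
  have reflection: "[128 ^ n * CLF (p - 1 - n) = (-1) ^ ((p - 1) div 2) * CLF n] (mod int p)"
    using CLF_reflection_cong[OF assms(1) \<open>n < p\<close>]
      cong_mult[OF CLF_pred_prime_cong[OF assms] cong_refl, of "CLF n"]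
    by (rule cong_trans)
  have "\<not> int p dvd 128 ^ n"
    using odd_prime_not_dvd_power_two[OF assms, of "7 * n"] by (simp add: power_mult)
  then have "int p dvd CLF (p - 1 - n) \<longleftrightarrow> int p dvd 128 ^ n * CLF (p - 1 - n)"
    using assms(1) by (simp add: prime_dvd_mult_iff)
  also have "\<dots> \<longleftrightarrow> int p dvd CLF n"
    using cong_dvd_iff[OF reflection] by (simp add: dvd_mult_unit_iff')
  finally show "[128 ^ n * CLF (p - 1 - n) = (-1) ^ ((p - 1) div 2) * CLF n] (mod int p)
      \<and> (int p dvd CLF n \<longleftrightarrow> int p dvd CLF (p - 1 - n))"
    using reflection by simp
qed

end
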